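(* In full second-order logic (full semantics), for any structure $\mathcal{M}$ in the signature $\{\in\}$: $\mathcal{M}\models\mathsf{LT}$ if and only if $\mathcal{M}$ is isomorphic to $\mathcal{V}_\alpha$ for some ordinal $\alpha>0$.
   Context: In the model theory, $V_0=\emptyset$, $V_{\alpha+1}=\mathcal{P}(V_\alpha)$, $V_\lambda=\bigcup_{\beta<\lambda}V_\beta$ for limit $\lambda$, and $\mathcal{V}_\alpha$ is the structure with domain $V_\alpha$ interpreting $\in$ as membership restricted to $V_\alpha$. Potentiation: $\mathrm{pot}(a)=\{x:\exists c(x\subseteq c\wedge c\in a)\}$. A history is a set $h$ with $x=\mathrm{pot}(x\cap h)$ for all $x\in h$; a level is $\mathrm{pot}(h)$ for some history $h$. $\mathsf{LT}$ (Level Theory) is the second-order theory with axioms Extensionality $\forall a\forall b(\forall x(x\in a\leftrightarrow x\in b)\to a=b)$, Separation $\forall F\forall a\exists b\forall x(x\in b\leftrightarrow(F(x)\wedge x\in a))$, and Stratification: every set is a subset of some level. *)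

theory Defs
  imports Main
begin

text \<open>A structure is a nonempty domain D together with a binary relation E
  (interpreting \<in>); everything is relativised to D. Full second-order
  semantics: second-order variables range over all subsets of the domain.\<close>

definition sub_M :: "'a set \<Rightarrow> ('a \<Rightarrow> 'a \<Rightarrow> bool) \<Rightarrow> 'a \<Rightarrow> 'a \<Rightarrow> bool" where
  "sub_M D E x c \<longleftrightarrow> (\<forall>y\<in>D. E y x \<longrightarrow> E y c)"

definition is_pot_of :: "'a set \<Rightarrow> ('a \<Rightarrow> 'a \<Rightarrow> bool) \<Rightarrow> 'a \<Rightarrow> 'a \<Rightarrow> bool" where
  "is_pot_of D E l a \<longleftrightarrow> (\<forall>x\<in>D. E x l \<longleftrightarrow> (\<exists>c\<in>D. E c a \<and> sub_M D E x c))"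

text \<open>h is a history: every x \<in> h satisfies x = pot(x \<inter> h).\<close>
definition history :: "'a set \<Rightarrow> ('a \<Rightarrow> 'a \<Rightarrow> bool) \<Rightarrow> 'a \<Rightarrow> bool" where
  "history D E h \<longleftrightarrow> (\<forall>x\<in>D. E x h \<longrightarrow>
      (\<forall>y\<in>D. E y x \<longleftrightarrow> (\<exists>c\<in>D. E c x \<and> E c h \<and> sub_M D E y c)))"

definition level :: "'a set \<Rightarrow> ('a \<Rightarrow> 'a \<Rightarrow> bool) \<Rightarrow> 'a \<Rightarrow> bool" where
  "level D E l \<longleftrightarrow> (\<exists>h\<in>D. history D E h \<and> is_pot_of D E l h)"

definition LT_model :: "'a set \<Rightarrow> ('a \<Rightarrow> 'a \<Rightarrow> bool) \<Rightarrow> bool" where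
  "LT_model D E \<longleftrightarrow>
     \<comment> \<open>Extensionality\<close>
     (\<forall>a\<in>D. \<forall>b\<in>D. (\<forall>x\<in>D. E x a \<longleftrightarrow> E x b) \<longrightarrow> a = b) \<and>
     \<comment> \<open>Separation (second-order, full semantics)\<close>
     (\<forall>F :: 'a set. \<forall>a\<in>D. \<exists>b\<in>D. \<forall>x\<in>D. E x b \<longleftrightarrow> (x \<in> F \<and> E x a)) \<and>
     \<comment> \<open>Stratification\<close>
     (\<forall>a\<in>D. \<exists>l\<in>D. level D E l \<and> sub_M D E a l)"

text \<open>Pure sets are coded as accessible pointed graphs: a code (R, x) is a
  well-founded relation R on nodes with a root x; (u, v) \<in> R means u \<in> v.
  Two codes denote the same set iff they are bisimilar.\<close>

type_synonym 'n code = "('n \<times> 'n) set \<times> 'n"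

definition is_code :: "'n code \<Rightarrow> bool" where
  "is_code c \<longleftrightarrow> wf (fst c)"

definition code_eq :: "'n code \<Rightarrow> 'n code \<Rightarrow> bool" where
  "code_eq c d \<longleftrightarrow> (\<exists>B. (snd c, snd d) \<in> B \<and>
     (\<forall>(u, v)\<in>B.
        (\<forall>u'. (u', u) \<in> fst c \<longrightarrow> (\<exists>v'. (v', v) \<in> fst d \<and> (u', v') \<in> B)) \<and>
        (\<forall>v'. (v', v) \<in> fst d \<longrightarrow> (\<exists>u'. (u', u) \<in> fst c \<and> (u', v') \<in> B))))"

definition code_mem :: "'n code \<Rightarrow> 'n code \<Rightarrow> bool" where
  "code_mem c d \<longleftrightarrow> (\<exists>z. (z, snd d) \<in> fst d \<and> code_eq c (fst d, z))"

text \<open>Ordinals are (order types of) well-orders r. The code c has rank < r iff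
  the nodes below (and including) its root admit a strictly increasing map
  into the field of r.\<close>
definition rank_below :: "'o rel \<Rightarrow> 'n code \<Rightarrow> bool" where
  "rank_below r c \<longleftrightarrow> (\<exists>f. (\<forall>u. (u, snd c) \<in> (fst c)\<^sup>* \<longrightarrow> f u \<in> Field r) \<and>
     (\<forall>u v. (u, v) \<in> fst c \<and> (v, snd c) \<in> (fst c)\<^sup>* \<longrightarrow> (f u, f v) \<in> r \<and> f u \<noteq> f v))"

definition Vcode :: "'o rel \<Rightarrow> 'n code set" where
  "Vcode r = {c. is_code c \<and> rank_below r c}"

text \<open>Nodes are taken from 'a + nat (large enough to code every element of any
  V_alpha of cardinality at most that of 'a).\<close>
definition iso_V :: "'a set \<Rightarrow> ('a \<Rightarrow> 'a \<Rightarrow> bool) \<Rightarrow> ('o rel) \<Rightarrow> bool" where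
  "iso_V D E r \<longleftrightarrow> (\<exists>g :: 'a \<Rightarrow> ('a + nat) code.
     (\<forall>d\<in>D. g d \<in> Vcode r) \<and>
     (\<forall>d\<in>D. \<forall>e\<in>D. code_eq (g d) (g e) \<longrightarrow> d = e) \<and>
     (\<forall>c\<in>Vcode r. \<exists>d\<in>D. code_eq c (g d)) \<and>
     (\<forall>d\<in>D. \<forall>e\<in>D. E d e \<longleftrightarrow> code_mem (g d) (g e)))"

end

(* Both sides are equivalent to the existence of a V-ranking of (D, E): a well-order W and a map
   rho from D into its field such that E is extensional and strictly raises rho, and every subset
   of D whose ranks lie below some beta is the extension of an element of rank at most beta.

   Coding each element by its membership graph turns a V-ranking into an isomorphism onto the
   well-founded graphs of rank below W; conversely an isomorphism yields a V-ranking by taking, for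
   each element, the least rank of its code. In a V-ranking the element V_beta collecting all
   elements of rank below beta is a level, the lower V_gamma forming its history, which gives the
   axioms of LT. Conversely, in a model of LT a Russell-style separation argument shows that
   histories are well-founded, hence so is membership; members of histories are levels, the levels
   are well-ordered by membership, and ranking each element by the least level including it is a
   V-ranking. *)

theory Submission
  imports Defs
begin

section \<open>Bisimilarity of codes\<close>

definition bisim :: "('n \<times> 'n) set \<Rightarrow> ('n \<times> 'n) set \<Rightarrow> ('n \<times> 'n) set \<Rightarrow> bool" where
  "bisim R S B \<longleftrightarrow> (\<forall>(u, v)\<in>B.
     (\<forall>u'. (u', u) \<in> R \<longrightarrow> (\<exists>v'. (v', v) \<in> S \<and> (u', v') \<in> B)) \<and>
     (\<forall>v'. (v', v) \<in> S \<longrightarrow> (\<exists>u'. (u', u) \<in> R \<and> (u', v') \<in> B)))"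

lemma code_eq_iff_bisim: "code_eq (R, x) (S, y) \<longleftrightarrow> (\<exists>B. bisim R S B \<and> (x, y) \<in> B)"
  unfolding code_eq_def bisim_def by auto

lemma bisimI:
  assumes "\<And>u v u'. (u, v) \<in> B \<Longrightarrow> (u', u) \<in> R \<Longrightarrow> \<exists>v'. (v', v) \<in> S \<and> (u', v') \<in> B"
    and "\<And>u v v'. (u, v) \<in> B \<Longrightarrow> (v', v) \<in> S \<Longrightarrow> \<exists>u'. (u', u) \<in> R \<and> (u', v') \<in> B"
  shows "bisim R S B"
  using assms unfolding bisim_def by auto

lemma bisimD1: "bisim R S B \<Longrightarrow> (u, v) \<in> B \<Longrightarrow> (u', u) \<in> R \<Longrightarrow> \<exists>v'. (v', v) \<in> S \<and> (u', v') \<in> B"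
  unfolding bisim_def by blast

lemma bisimD2: "bisim R S B \<Longrightarrow> (u, v) \<in> B \<Longrightarrow> (v', v) \<in> S \<Longrightarrow> \<exists>u'. (u', u) \<in> R \<and> (u', v') \<in> B"
  unfolding bisim_def by blast

lemma code_eq_refl: "code_eq c c"
proof -
  have "bisim (fst c) (fst c) Id" by (rule bisimI) auto
  then show ?thesis using code_eq_iff_bisim[of "fst c" "snd c" "fst c" "snd c"] by auto
qed

lemma code_eq_sym: assumes "code_eq (R, x) (S, y)" shows "code_eq (S, y) (R, x)"
proof -
  obtain B where B: "bisim R S B" "(x, y) \<in> B" using assms unfolding code_eq_iff_bisim by blast
  have "bisim S R (B\<inverse>)"
  proof (rule bisimI)
    fix v u v' assume "(v, u) \<in> B\<inverse>" "(v', v) \<in> S"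
    then show "\<exists>u'. (u', u) \<in> R \<and> (v', u') \<in> B\<inverse>" using bisimD2[OF B(1)] by blast
  next
    fix v u u' assume "(v, u) \<in> B\<inverse>" "(u', u) \<in> R"
    then show "\<exists>v'. (v', v) \<in> S \<and> (v', u') \<in> B\<inverse>" using bisimD1[OF B(1)] by blast
  qed
  then show ?thesis unfolding code_eq_iff_bisim using B(2) by blast
qed

lemma code_eq_trans:
  assumes "code_eq (R, x) (S, y)" and "code_eq (S, y) (T, z)"
  shows "code_eq (R, x) (T, z)"
proof -
  obtain B where B: "bisim R S B" "(x, y) \<in> B" using assms(1) unfolding code_eq_iff_bisim by blast
  obtain C where C: "bisim S T C" "(y, z) \<in> C" using assms(2) unfolding code_eq_iff_bisim by blast
  have "bisim R T (B O C)"
  proof (rule bisimI)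
    fix u w u' assume "(u, w) \<in> B O C" "(u', u) \<in> R"
    then obtain v where "(u, v) \<in> B" "(v, w) \<in> C" by blast
    then obtain v' where "(v', v) \<in> S" "(u', v') \<in> B" using bisimD1[OF B(1)] \<open>(u', u) \<in> R\<close> by blast
    moreover obtain w' where "(w', w) \<in> T" "(v', w') \<in> C"
      using bisimD1[OF C(1) \<open>(v, w) \<in> C\<close> \<open>(v', v) \<in> S\<close>] by blast
    ultimately show "\<exists>w'. (w', w) \<in> T \<and> (u', w') \<in> B O C" by blast
  next
    fix u w w' assume "(u, w) \<in> B O C" "(w', w) \<in> T"
    then obtain v where "(u, v) \<in> B" "(v, w) \<in> C" by blast
    then obtain v' where "(v', v) \<in> S" "(v', w') \<in> C" using bisimD2[OF C(1)] \<open>(w', w) \<in> T\<close> by blast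
    moreover obtain u' where "(u', u) \<in> R" "(u', v') \<in> B"
      using bisimD2[OF B(1) \<open>(u, v) \<in> B\<close> \<open>(v', v) \<in> S\<close>] by blast
    ultimately show "\<exists>u'. (u', u) \<in> R \<and> (u', w') \<in> B O C" by blast
  qed
  then show ?thesis unfolding code_eq_iff_bisim using B(2) C(2) by blast
qed

lemma code_eq_childD1:
  "code_eq (R, x) (S, y) \<Longrightarrow> (x', x) \<in> R \<Longrightarrow> \<exists>y'. (y', y) \<in> S \<and> code_eq (R, x') (S, y')"
  unfolding code_eq_iff_bisim by (meson bisimD1)

lemma code_eq_childD2:
  "code_eq (R, x) (S, y) \<Longrightarrow> (y', y) \<in> S \<Longrightarrow> \<exists>x'. (x', x) \<in> R \<and> code_eq (R, x') (S, y')"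
  unfolding code_eq_iff_bisim by (meson bisimD2)

lemma code_eq_childI:
  assumes "\<And>x'. (x', x) \<in> R \<Longrightarrow> \<exists>y'. (y', y) \<in> S \<and> code_eq (R, x') (S, y')"
    and "\<And>y'. (y', y) \<in> S \<Longrightarrow> \<exists>x'. (x', x) \<in> R \<and> code_eq (R, x') (S, y')"
  shows "code_eq (R, x) (S, y)"
proof -
  let ?B = "insert (x, y) {(u, v). code_eq (R, u) (S, v)}"
  have "bisim R S ?B"
  proof (rule bisimI)
    fix u v u' assume "(u, v) \<in> ?B" and u': "(u', u) \<in> R"
    then consider "u = x" "v = y" | "code_eq (R, u) (S, v)" by blast
    then show "\<exists>v'. (v', v) \<in> S \<and> (u', v') \<in> ?B"
      by cases (use assms(1) u' code_eq_childD1 in fastforce)+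
  next
    fix u v v' assume "(u, v) \<in> ?B" and v': "(v', v) \<in> S"
    then consider "u = x" "v = y" | "code_eq (R, u) (S, v)" by blast
    then show "\<exists>u'. (u', u) \<in> R \<and> (u', v') \<in> ?B"
      by cases (use assms(2) v' code_eq_childD2 in fastforce)+
  qed
  then show ?thesis unfolding code_eq_iff_bisim by blast
qed

section \<open>Rank maps\<close>

lemma (in wo_rel) le_less_trans_rel: "(a, b) \<in> r \<Longrightarrow> (b, c) \<in> r \<Longrightarrow> b \<noteq> c \<Longrightarrow> (a, c) \<in> r \<and> a \<noteq> c"
  using TRANS ANTISYM by (metis transD antisymD)

lemma (in wo_rel) less_le_trans_rel: "(a, b) \<in> r \<Longrightarrow> a \<noteq> b \<Longrightarrow> (b, c) \<in> r \<Longrightarrow> (a, c) \<in> r \<and> a \<noteq> c"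
  using TRANS ANTISYM by (metis transD antisymD)

definition rank_map :: "'o rel \<Rightarrow> 'n code \<Rightarrow> ('n \<Rightarrow> 'o) \<Rightarrow> bool" where
  "rank_map r c f \<longleftrightarrow> (\<forall>u. (u, snd c) \<in> (fst c)\<^sup>* \<longrightarrow> f u \<in> Field r) \<and>
     (\<forall>u v. (u, v) \<in> fst c \<and> (v, snd c) \<in> (fst c)\<^sup>* \<longrightarrow> (f u, f v) \<in> r \<and> f u \<noteq> f v)"

lemma Vcode_iff: "(R, x) \<in> Vcode r \<longleftrightarrow> wf R \<and> (\<exists>f. rank_map r (R, x) f)"
  unfolding Vcode_def is_code_def rank_below_def rank_map_def by simp

lemma rank_mapI:
  assumes "\<And>u. (u, x) \<in> R\<^sup>* \<Longrightarrow> f u \<in> Field r"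
    and "\<And>u v. (u, v) \<in> R \<Longrightarrow> (v, x) \<in> R\<^sup>* \<Longrightarrow> (f u, f v) \<in> r \<and> f u \<noteq> f v"
  shows "rank_map r (R, x) f"
  using assms unfolding rank_map_def by auto

lemma rank_map_Field: "rank_map r (R, x) f \<Longrightarrow> (u, x) \<in> R\<^sup>* \<Longrightarrow> f u \<in> Field r"
  unfolding rank_map_def by auto

lemma rank_map_less: "rank_map r (R, x) f \<Longrightarrow> (u, v) \<in> R \<Longrightarrow> (v, x) \<in> R\<^sup>* \<Longrightarrow> (f u, f v) \<in> r \<and> f u \<noteq> f v"
  unfolding rank_map_def by auto

lemma rank_map_rtrancl:
  assumes f: "rank_map r (R, x) f" and x': "(x', x) \<in> R\<^sup>*"
  shows "rank_map r (R, x') f"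
proof (rule rank_mapI)
  show "f u \<in> Field r" if "(u, x') \<in> R\<^sup>*" for u
    using rank_map_Field[OF f rtrancl_trans[OF that x']] .
  show "(f u, f v) \<in> r \<and> f u \<noteq> f v" if "(u, v) \<in> R" "(v, x') \<in> R\<^sup>*" for u v
    using rank_map_less[OF f that(1) rtrancl_trans[OF that(2) x']] .
qed

lemma Vcode_rtrancl: "(R, x) \<in> Vcode r \<Longrightarrow> (u, x) \<in> R\<^sup>* \<Longrightarrow> (R, u) \<in> Vcode r"
  unfolding Vcode_iff by (metis rank_map_rtrancl)

text \<open>Rank maps transfer along bisimulations: each node w of the target is ranked by the least
  rank of a source node bisimilar to it.\<close>
lemma (in wo_rel) rank_map_code_eq:
  assumes eq: "code_eq (R, x) (S, y)" and f: "rank_map r (R, x) f"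
  shows "\<exists>g. rank_map r (S, y) g \<and> (g y, f x) \<in> r"
proof -
  obtain B where B: "bisim R S B" "(x, y) \<in> B" using eq unfolding code_eq_iff_bisim by blast
  define A where "A w = {f v | v. (v, x) \<in> R\<^sup>* \<and> (v, w) \<in> B}" for w
  define g where "g w = minim (A w)" for w
  have A_Field: "A w \<subseteq> Field r" for w
    unfolding A_def using rank_map_Field[OF f] by blast
  have "\<exists>v. (v, x) \<in> R\<^sup>* \<and> (v, w) \<in> B" if "(w, y) \<in> S\<^sup>*" for w
    using that
  proof (induction rule: converse_rtrancl_induct)
    case base
    then show ?case using B(2) by blast
  next
    case (step w w')
    then obtain v' where "(v', x) \<in> R\<^sup>*" "(v', w') \<in> B" by blast
    moreover obtain v where "(v, v') \<in> R" "(v, w) \<in> B" using bisimD2[OF B(1) \<open>(v', w') \<in> B\<close> step(1)] by blast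
    ultimately show ?case by (meson converse_rtrancl_into_rtrancl)
  qed
  then have g_in_A: "g w \<in> A w" if "(w, y) \<in> S\<^sup>*" for w
    unfolding g_def using minim_in[OF A_Field] that unfolding A_def by blast
  have g_least: "(g w, a) \<in> r" if "a \<in> A w" for w a
    unfolding g_def using minim_least[OF A_Field that] .
  have "rank_map r (S, y) g"
  proof (rule rank_mapI)
    fix w assume "(w, y) \<in> S\<^sup>*"
    then show "g w \<in> Field r" using g_in_A A_Field by blast
  next
    fix w1 w2 assume w1: "(w1, w2) \<in> S" and w2: "(w2, y) \<in> S\<^sup>*"
    obtain v2 where v2: "g w2 = f v2" "(v2, x) \<in> R\<^sup>*" "(v2, w2) \<in> B"
      using g_in_A[OF w2] unfolding A_def by blast
    obtain v1 where v1: "(v1, v2) \<in> R" "(v1, w1) \<in> B" using bisimD2[OF B(1) v2(3) w1] by blast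
    have "(v1, x) \<in> R\<^sup>*" using v1(1) v2(2) by (meson converse_rtrancl_into_rtrancl)
    then have "(g w1, f v1) \<in> r" using g_least v1(2) unfolding A_def by blast
    moreover have "(f v1, f v2) \<in> r \<and> f v1 \<noteq> f v2" using rank_map_less[OF f v1(1) v2(2)] .
    ultimately show "(g w1, g w2) \<in> r \<and> g w1 \<noteq> g w2" using le_less_trans_rel v2(1) by auto
  qed
  moreover have "f x \<in> A y" unfolding A_def using B(2) by blast
  ultimately show ?thesis using g_least by blast
qed

section \<open>Membership graphs\<close>

definition extensional_on :: "'a set \<Rightarrow> ('a \<Rightarrow> 'a \<Rightarrow> bool) \<Rightarrow> bool" where
  "extensional_on D E \<longleftrightarrow> (\<forall>a\<in>D. \<forall>b\<in>D. (\<forall>x\<in>D. E x a \<longleftrightarrow> E x b) \<longrightarrow> a = b)"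

definition mem_rel :: "'a set \<Rightarrow> ('a \<Rightarrow> 'a \<Rightarrow> bool) \<Rightarrow> 'a rel" where
  "mem_rel D E = {(x, y). x \<in> D \<and> y \<in> D \<and> E x y}"

lemma in_mem_rel [simp]: "(x, y) \<in> mem_rel D E \<longleftrightarrow> x \<in> D \<and> y \<in> D \<and> E x y"
  unfolding mem_rel_def by simp

definition mem_graph :: "'a set \<Rightarrow> ('a \<Rightarrow> 'a \<Rightarrow> bool) \<Rightarrow> ('a + nat) rel" where
  "mem_graph D E = map_prod Inl Inl ` mem_rel D E"

text \<open>The code (set_graph D E S, Inr 0) denotes the set of the elements in S.\<close>
definition set_graph :: "'a set \<Rightarrow> ('a \<Rightarrow> 'a \<Rightarrow> bool) \<Rightarrow> 'a set \<Rightarrow> ('a + nat) rel" where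
  "set_graph D E S = mem_graph D E \<union> (\<lambda>x. (Inl x, Inr 0)) ` S"

lemma in_mem_graph:
  "(u, v) \<in> mem_graph D E \<longleftrightarrow> (\<exists>x y. u = Inl x \<and> v = Inl y \<and> x \<in> D \<and> y \<in> D \<and> E x y)"
  unfolding mem_graph_def by auto

lemma Inl_in_mem_graph [simp]: "(Inl x, Inl y) \<in> mem_graph D E \<longleftrightarrow> x \<in> D \<and> y \<in> D \<and> E x y"
  unfolding in_mem_graph by simp

lemma mem_graph_children: "y \<in> D \<Longrightarrow> (z, Inl y) \<in> mem_graph D E \<longleftrightarrow> (\<exists>x\<in>D. z = Inl x \<and> E x y)"
  unfolding in_mem_graph by blast

lemma in_set_graph:
  "(u, v) \<in> set_graph D E S \<longleftrightarrow> (u, v) \<in> mem_graph D E \<or> (\<exists>x\<in>S. u = Inl x \<and> v = Inr 0)"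
  unfolding set_graph_def by blast

lemma set_graph_Inl_children [simp]: "(z, Inl y) \<in> set_graph D E S \<longleftrightarrow> (z, Inl y) \<in> mem_graph D E"
  unfolding set_graph_def by auto

lemma set_graph_Inr_children: "(z, Inr 0) \<in> set_graph D E S \<longleftrightarrow> (\<exists>x\<in>S. z = Inl x)"
  by (auto simp: set_graph_def in_mem_graph)

lemma wf_mem_graph: "wf (mem_rel D E) \<Longrightarrow> wf (mem_graph D E)"
  unfolding mem_graph_def by (erule wf_map_prod_image) simp

lemma wf_set_graph:
  assumes "wf (mem_rel D E)" shows "wf (set_graph D E S)"
proof -
  have "(\<lambda>x. (Inl x, Inr 0 :: 'a + nat)) ` S \<subseteq> measure (case_sum (\<lambda>_. 0) (\<lambda>_. 1))"
    by auto
  then have "wf ((\<lambda>x. (Inl x, Inr 0 :: 'a + nat)) ` S)" by (rule wf_subset[OF wf_measure])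
  moreover have "Domain (mem_graph D E) \<inter> Range ((\<lambda>x. (Inl x, Inr 0 :: 'a + nat)) ` S) = {}"
    by (auto simp: in_mem_graph)
  ultimately show ?thesis
    unfolding set_graph_def using wf_Un[OF wf_mem_graph[OF assms]] by blast
qed

lemma mem_graph_rtrancl_Inl:
  assumes "y \<in> D" and "(z, Inl y) \<in> (mem_graph D E)\<^sup>*"
  shows "z \<in> Inl ` D"
  using assms(2)
proof (cases rule: converse_rtranclE)
  case (step z')
  then show ?thesis unfolding in_mem_graph by blast
qed (use assms(1) in blast)

lemma set_graph_rtrancl_Inr:
  assumes "S \<subseteq> D" and "(z, Inr 0) \<in> (set_graph D E S)\<^sup>*"
  shows "z = Inr 0 \<or> z \<in> Inl ` D"
  using assms(2)
proof (cases rule: converse_rtranclE)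
  case (step z')
  then show ?thesis using assms(1) by (auto simp: set_graph_def in_mem_graph)
qed simp

lemma code_eq_set_graph_mem_graph: "code_eq (set_graph D E S, Inl x) (mem_graph D E, Inl x)"
proof -
  have "bisim (set_graph D E S) (mem_graph D E) (Id_on (range Inl))"
    by (rule bisimI) (fastforce simp: in_mem_graph)+
  then show ?thesis unfolding code_eq_iff_bisim by blast
qed

lemma mem_graph_code_inj:
  assumes wf: "wf (mem_rel D E)" and ext: "extensional_on D E"
  shows "x \<in> D \<Longrightarrow> y \<in> D \<Longrightarrow> code_eq (mem_graph D E, Inl x) (mem_graph D E, Inl y) \<Longrightarrow> x = y"
proof (induction x arbitrary: y rule: wf_induct_rule[OF wf])
  case (1 x)
  note x = "1.prems"(1) and y = "1.prems"(2) and eq = "1.prems"(3)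
  have "E z x \<longleftrightarrow> E z y" if z: "z \<in> D" for z
  proof
    assume "E z x"
    then have "(Inl z, Inl x) \<in> mem_graph D E" using x z by simp
    then obtain y' where y': "(y', Inl y) \<in> mem_graph D E" "code_eq (mem_graph D E, Inl z) (mem_graph D E, y')"
      using code_eq_childD1[OF eq] by blast
    then obtain z' where z': "z' \<in> D" "y' = Inl z'" "E z' y" using mem_graph_children[OF y] by blast
    have "z = z'"
      by (rule "1.IH") (use x z \<open>E z x\<close> z' y'(2) in simp_all)
    then show "E z y" using z' by simp
  next
    assume "E z y"
    then have "(Inl z, Inl y) \<in> mem_graph D E" using y z by simp
    then obtain x' where x': "(x', Inl x) \<in> mem_graph D E" "code_eq (mem_graph D E, x') (mem_graph D E, Inl z)"
      using code_eq_childD2[OF eq] by blast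
    then obtain z' where z': "z' \<in> D" "x' = Inl z'" "E z' x" using mem_graph_children[OF x] by blast
    have "z' = z"
      by (rule "1.IH") (use x z z' x'(2) in simp_all)
    then show "E z x" using z' by simp
  qed
  then show ?case using ext x y unfolding extensional_on_def by blast
qed

section \<open>V-rankings\<close>

text \<open>The internal counterpart of an isomorphism with V_alpha: \<rho> is the rank function, W
  indexes the ranks, and the last assumption says that every subset of V_beta is an element
  of V_(beta+1).\<close>
locale V_ranking = wo_rel W for W :: "'o rel" +
  fixes D :: "'a set" and E :: "'a \<Rightarrow> 'a \<Rightarrow> bool" and \<rho> :: "'a \<Rightarrow> 'o"
  assumes extensional: "extensional_on D E"
    and rank_Field: "x \<in> D \<Longrightarrow> \<rho> x \<in> Field W"
    and rank_less: "x \<in> D \<Longrightarrow> y \<in> D \<Longrightarrow> E x y \<Longrightarrow> (\<rho> x, \<rho> y) \<in> W \<and> \<rho> x \<noteq> \<rho> y"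
    and realize: "\<beta> \<in> Field W \<Longrightarrow> S \<subseteq> D \<Longrightarrow> (\<And>x. x \<in> S \<Longrightarrow> (\<rho> x, \<beta>) \<in> W \<and> \<rho> x \<noteq> \<beta>) \<Longrightarrow>
      \<exists>b\<in>D. (\<forall>x\<in>D. E x b \<longleftrightarrow> x \<in> S) \<and> (\<rho> b, \<beta>) \<in> W"
begin

lemma wf_mem_rel: "wf (mem_rel D E)"
proof (rule wf_subset)
  show "wf (inv_image (W - Id) \<rho>)" using WF by (rule wf_inv_image)
  show "mem_rel D E \<subseteq> inv_image (W - Id) \<rho>" using rank_less by auto
qed

lemma mem_graph_in_Vcode:
  assumes "d \<in> D" shows "(mem_graph D E, Inl d) \<in> Vcode W"
proof -
  have "rank_map W (mem_graph D E, Inl d) (case_sum \<rho> (\<lambda>_. \<rho> d))"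
  proof (rule rank_mapI)
    fix u assume "(u, Inl d) \<in> (mem_graph D E)\<^sup>*"
    then obtain y where "y \<in> D" "u = Inl y" using mem_graph_rtrancl_Inl[OF assms] by blast
    then show "case_sum \<rho> (\<lambda>_. \<rho> d) u \<in> Field W" by (simp add: rank_Field)
  next
    fix u v assume "(u, v) \<in> mem_graph D E"
    then show "(case_sum \<rho> (\<lambda>_. \<rho> d) u, case_sum \<rho> (\<lambda>_. \<rho> d) v) \<in> W \<and>
        case_sum \<rho> (\<lambda>_. \<rho> d) u \<noteq> case_sum \<rho> (\<lambda>_. \<rho> d) v"
      unfolding in_mem_graph using rank_less by auto
  qed
  then show ?thesis unfolding Vcode_iff using wf_mem_graph[OF wf_mem_rel] by blast
qed

text \<open>Induction along R: node u is realized by the element whose members realize the children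
  of u, supplied by realize; its rank stays below f u because the children have smaller f-ranks.\<close>
lemma code_realized:
  assumes R: "wf R" and f: "rank_map W (R, x) f"
  shows "(u, x) \<in> R\<^sup>* \<Longrightarrow> \<exists>b\<in>D. code_eq (R, u) (mem_graph D E, Inl b) \<and> (\<rho> b, f u) \<in> W"
proof (induction u rule: wf_induct_rule[OF R])
  case (1 u)
  have IH: "\<exists>b\<in>D. code_eq (R, u') (mem_graph D E, Inl b) \<and> (\<rho> b, f u') \<in> W" if "(u', u) \<in> R" for u'
    using "1.IH"[OF that] "1.prems" that by (meson converse_rtrancl_into_rtrancl)
  define S where "S = {b \<in> D. \<exists>u'. (u', u) \<in> R \<and> code_eq (R, u') (mem_graph D E, Inl b)}"
  have S_rank: "(\<rho> b, f u) \<in> W \<and> \<rho> b \<noteq> f u" if bS: "b \<in> S" for b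
  proof -
    obtain u' where u': "(u', u) \<in> R" "code_eq (R, u') (mem_graph D E, Inl b)" "b \<in> D"
      using bS unfolding S_def by blast
    obtain b' where b': "b' \<in> D" "code_eq (R, u') (mem_graph D E, Inl b')" "(\<rho> b', f u') \<in> W"
      using IH[OF u'(1)] by blast
    have "b = b'"
      using mem_graph_code_inj[OF wf_mem_rel extensional u'(3) b'(1)]
        code_eq_trans[OF code_eq_sym[OF u'(2)] b'(2)] .
    moreover have "(f u', f u) \<in> W \<and> f u' \<noteq> f u" using rank_map_less[OF f u'(1) "1.prems"] .
    ultimately show ?thesis using le_less_trans_rel b'(3) by blast
  qed
  obtain b where b: "b \<in> D" "\<forall>z\<in>D. E z b \<longleftrightarrow> z \<in> S" "(\<rho> b, f u) \<in> W"
    using realize[OF rank_map_Field[OF f "1.prems"], of S] S_rank unfolding S_def by blast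
  have "code_eq (R, u) (mem_graph D E, Inl b)"
  proof (rule code_eq_childI)
    fix u' assume u': "(u', u) \<in> R"
    then obtain b' where b': "b' \<in> D" "code_eq (R, u') (mem_graph D E, Inl b')" using IH by blast
    then have "b' \<in> S" unfolding S_def using u' by blast
    then have "(Inl b', Inl b) \<in> mem_graph D E" using b b'(1) by simp
    then show "\<exists>y'. (y', Inl b) \<in> mem_graph D E \<and> code_eq (R, u') (mem_graph D E, y')" using b'(2) by blast
  next
    fix y' assume "(y', Inl b) \<in> mem_graph D E"
    then obtain z where z: "z \<in> D" "y' = Inl z" "E z b" using mem_graph_children[OF b(1)] by blast
    then have "z \<in> S" using b(2) by blast
    then show "\<exists>u'. (u', u) \<in> R \<and> code_eq (R, u') (mem_graph D E, y')" unfolding S_def z(2) by blast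
  qed
  then show ?case using b(1,3) by blast
qed

lemma iso_V: "iso_V D E W"
  unfolding iso_V_def
proof (intro exI[of _ "\<lambda>d. (mem_graph D E, Inl d)"] conjI ballI impI)
  fix d assume "d \<in> D"
  then show "(mem_graph D E, Inl d) \<in> Vcode W" by (rule mem_graph_in_Vcode)
next
  fix d e assume "d \<in> D" "e \<in> D" "code_eq (mem_graph D E, Inl d) (mem_graph D E, Inl e)"
  then show "d = e" by (rule mem_graph_code_inj[OF wf_mem_rel extensional])
next
  fix c :: "('a + nat) code" assume c: "c \<in> Vcode W"
  obtain R x where c_eq: "c = (R, x)" by fastforce
  obtain f where "wf R" "rank_map W (R, x) f" using c unfolding c_eq Vcode_iff by blast
  then show "\<exists>d\<in>D. code_eq c (mem_graph D E, Inl d)"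
    using code_realized[of R x f x] unfolding c_eq by blast
next
  fix d e assume de: "d \<in> D" "e \<in> D"
  show "E d e \<longleftrightarrow> code_mem (mem_graph D E, Inl d) (mem_graph D E, Inl e)"
  proof
    assume "E d e"
    then have "(Inl d, Inl e) \<in> mem_graph D E" using de by simp
    then show "code_mem (mem_graph D E, Inl d) (mem_graph D E, Inl e)"
      unfolding code_mem_def using code_eq_refl by (metis fst_conv snd_conv)
  next
    assume "code_mem (mem_graph D E, Inl d) (mem_graph D E, Inl e)"
    then obtain z where z: "(z, Inl e) \<in> mem_graph D E" "code_eq (mem_graph D E, Inl d) (mem_graph D E, z)"
      unfolding code_mem_def by auto
    then obtain x where "x \<in> D" "z = Inl x" "E x e" using mem_graph_children[OF de(2)] by blast
    moreover have "d = x" using mem_graph_code_inj[OF wf_mem_rel extensional de(1) \<open>x \<in> D\<close>] z(2) \<open>z = Inl x\<close> by simp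
    ultimately show "E d e" by simp
  qed
qed

end

context V_ranking
begin

definition stage :: "'o \<Rightarrow> 'a" where
  "stage \<gamma> = (SOME b. b \<in> D \<and> (\<forall>x\<in>D. E x b \<longleftrightarrow> (\<rho> x, \<gamma>) \<in> W \<and> \<rho> x \<noteq> \<gamma>) \<and> (\<rho> b, \<gamma>) \<in> W)"

lemma stage:
  assumes "\<gamma> \<in> Field W"
  shows "stage \<gamma> \<in> D" and "x \<in> D \<Longrightarrow> E x (stage \<gamma>) \<longleftrightarrow> (\<rho> x, \<gamma>) \<in> W \<and> \<rho> x \<noteq> \<gamma>"
    and "\<rho> (stage \<gamma>) = \<gamma>"
proof -
  obtain b where "b \<in> D" "\<forall>x\<in>D. E x b \<longleftrightarrow> x \<in> {x \<in> D. (\<rho> x, \<gamma>) \<in> W \<and> \<rho> x \<noteq> \<gamma>}" "(\<rho> b, \<gamma>) \<in> W"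
    using realize[OF assms, of "{x \<in> D. (\<rho> x, \<gamma>) \<in> W \<and> \<rho> x \<noteq> \<gamma>}"] by blast
  then have "\<exists>b. b \<in> D \<and> (\<forall>x\<in>D. E x b \<longleftrightarrow> (\<rho> x, \<gamma>) \<in> W \<and> \<rho> x \<noteq> \<gamma>) \<and> (\<rho> b, \<gamma>) \<in> W" by blast
  then have "stage \<gamma> \<in> D \<and> (\<forall>x\<in>D. E x (stage \<gamma>) \<longleftrightarrow> (\<rho> x, \<gamma>) \<in> W \<and> \<rho> x \<noteq> \<gamma>) \<and>
      (\<rho> (stage \<gamma>), \<gamma>) \<in> W"
    unfolding stage_def by (rule someI_ex)
  then have b: "stage \<gamma> \<in> D" "\<forall>x\<in>D. E x (stage \<gamma>) \<longleftrightarrow> (\<rho> x, \<gamma>) \<in> W \<and> \<rho> x \<noteq> \<gamma>"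
      "(\<rho> (stage \<gamma>), \<gamma>) \<in> W"
    by blast+
  show "stage \<gamma> \<in> D" "x \<in> D \<Longrightarrow> E x (stage \<gamma>) \<longleftrightarrow> (\<rho> x, \<gamma>) \<in> W \<and> \<rho> x \<noteq> \<gamma>" for x
    using b(1,2) by blast+
  show "\<rho> (stage \<gamma>) = \<gamma>"
    using b rank_less[OF b(1) b(1)] by blast
qed

lemma rank_le_if_members_below:
  assumes x: "x \<in> D" and \<gamma>: "\<gamma> \<in> Field W"
    and below: "\<And>y. y \<in> D \<Longrightarrow> E y x \<Longrightarrow> (\<rho> y, \<gamma>) \<in> W \<and> \<rho> y \<noteq> \<gamma>"
  shows "(\<rho> x, \<gamma>) \<in> W"
proof -
  obtain b where "b \<in> D" "\<forall>y\<in>D. E y b \<longleftrightarrow> y \<in> {y \<in> D. E y x}" "(\<rho> b, \<gamma>) \<in> W"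
    using realize[OF \<gamma>, of "{y \<in> D. E y x}"] below by blast
  moreover have "b = x" using extensional calculation(1,2) x unfolding extensional_on_def by blast
  ultimately show ?thesis by simp
qed

lemma sub_stage_iff:
  assumes x: "x \<in> D" and \<gamma>: "\<gamma> \<in> Field W"
  shows "sub_M D E x (stage \<gamma>) \<longleftrightarrow> (\<rho> x, \<gamma>) \<in> W"
proof
  assume "sub_M D E x (stage \<gamma>)"
  then show "(\<rho> x, \<gamma>) \<in> W"
    using rank_le_if_members_below[OF x \<gamma>] stage(2)[OF \<gamma>] unfolding sub_M_def by blast
next
  assume "(\<rho> x, \<gamma>) \<in> W"
  then show "sub_M D E x (stage \<gamma>)"
    unfolding sub_M_def using stage(2)[OF \<gamma>] rank_less x less_le_trans_rel by blast
qed

lemma sub_stage_rank: "x \<in> D \<Longrightarrow> sub_M D E x (stage (\<rho> x))"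
  using sub_stage_iff[OF _ rank_Field] REFL rank_Field unfolding refl_on_def by blast

lemma underS_in_Field: "\<delta> \<in> underS \<gamma> \<Longrightarrow> \<delta> \<in> Field W"
  unfolding underS_def by (blast intro: FieldI1)

lemma stage_underS_subset: "stage ` underS \<gamma> \<subseteq> D"
proof
  fix c assume "c \<in> stage ` underS \<gamma>"
  then obtain \<delta> where "\<delta> \<in> underS \<gamma>" "c = stage \<delta>" by blast
  then show "c \<in> D" using stage(1)[OF underS_in_Field] by simp
qed

lemma stage_mem_stage_iff:
  assumes "\<delta> \<in> Field W" and "\<gamma> \<in> Field W"
  shows "E (stage \<delta>) (stage \<gamma>) \<longleftrightarrow> \<delta> \<in> underS \<gamma>"
  unfolding stage(2)[OF assms(2) stage(1)[OF assms(1)]] stage(3)[OF assms(1)] underS_def by blast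

lemma mem_stage_iff_sub_lower_stage:
  assumes y: "y \<in> D" and \<gamma>: "\<gamma> \<in> Field W"
  shows "E y (stage \<gamma>) \<longleftrightarrow> (\<exists>c\<in>stage ` underS \<gamma>. sub_M D E y c)"
proof
  assume "E y (stage \<gamma>)"
  then have "\<rho> y \<in> underS \<gamma>" using stage(2)[OF \<gamma> y] unfolding underS_def by simp
  moreover have "sub_M D E y (stage (\<rho> y))" using sub_stage_rank[OF y] .
  ultimately show "\<exists>c\<in>stage ` underS \<gamma>. sub_M D E y c" by blast
next
  assume "\<exists>c\<in>stage ` underS \<gamma>. sub_M D E y c"
  then obtain \<delta> where \<delta>: "\<delta> \<in> underS \<gamma>" "sub_M D E y (stage \<delta>)" by blast
  then have "(\<rho> y, \<delta>) \<in> W" using sub_stage_iff[OF y underS_in_Field] by simp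
  then have "(\<rho> y, \<gamma>) \<in> W \<and> \<rho> y \<noteq> \<gamma>" using le_less_trans_rel \<delta>(1) unfolding underS_def by blast
  then show "E y (stage \<gamma>)" using stage(2)[OF \<gamma> y] by simp
qed

lemma lower_stages_of_stage:
  assumes \<delta>: "\<delta> \<in> underS \<gamma>" and c: "c \<in> D"
  shows "E c (stage \<delta>) \<and> c \<in> stage ` underS \<gamma> \<longleftrightarrow> c \<in> stage ` underS \<delta>"
proof
  assume "E c (stage \<delta>) \<and> c \<in> stage ` underS \<gamma>"
  then obtain \<delta>' where "\<delta>' \<in> underS \<gamma>" "c = stage \<delta>'" "E (stage \<delta>') (stage \<delta>)" by blast
  then show "c \<in> stage ` underS \<delta>"
    using stage_mem_stage_iff[OF underS_in_Field underS_in_Field[OF \<delta>]] by blast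
next
  assume "c \<in> stage ` underS \<delta>"
  then obtain \<delta>' where \<delta>': "\<delta>' \<in> underS \<delta>" "c = stage \<delta>'" by blast
  then have "E c (stage \<delta>)"
    using stage_mem_stage_iff[OF underS_in_Field underS_in_Field[OF \<delta>]] by blast
  moreover have "\<delta>' \<in> underS \<gamma>" using \<delta>'(1) \<delta> le_less_trans_rel unfolding underS_def by blast
  ultimately show "E c (stage \<delta>) \<and> c \<in> stage ` underS \<gamma>" using \<delta>'(2) by blast
qed

text \<open>The history witnessing that stage \<gamma> is a level is the set of the lower stages.\<close>
lemma level_stage:
  assumes \<gamma>: "\<gamma> \<in> Field W"
  shows "level D E (stage \<gamma>)"
proof -
  have "(\<rho> x, \<gamma>) \<in> W \<and> \<rho> x \<noteq> \<gamma>" if x: "x \<in> stage ` underS \<gamma>" for x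
  proof -
    obtain \<delta> where "\<delta> \<in> underS \<gamma>" "x = stage \<delta>" using x by blast
    then show ?thesis using stage(3)[OF underS_in_Field] unfolding underS_def by simp
  qed
  then obtain h where h: "h \<in> D" "\<forall>c\<in>D. E c h \<longleftrightarrow> c \<in> stage ` underS \<gamma>"
    using realize[OF \<gamma> stage_underS_subset] by blast
  have ex_lower_stage: "(\<exists>c\<in>D. Q c \<and> P c) \<longleftrightarrow> (\<exists>c\<in>stage ` underS \<delta>. P c)"
    if Q: "\<And>c. c \<in> D \<Longrightarrow> Q c \<longleftrightarrow> c \<in> stage ` underS \<delta>" for Q P \<delta>
  proof
    assume "\<exists>c\<in>D. Q c \<and> P c"
    then show "\<exists>c\<in>stage ` underS \<delta>. P c" using Q by blast
  next
    assume "\<exists>c\<in>stage ` underS \<delta>. P c"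
    then obtain c where c: "c \<in> stage ` underS \<delta>" "P c" by blast
    moreover have "c \<in> D" using c(1) stage_underS_subset by blast
    ultimately show "\<exists>c\<in>D. Q c \<and> P c" using Q by blast
  qed
  have "is_pot_of D E (stage \<gamma>) h"
    unfolding is_pot_of_def
  proof
    fix x assume x: "x \<in> D"
    have "(\<exists>c\<in>D. E c h \<and> sub_M D E x c) \<longleftrightarrow> (\<exists>c\<in>stage ` underS \<gamma>. sub_M D E x c)"
      by (rule ex_lower_stage) (use h(2) in blast)
    then show "E x (stage \<gamma>) \<longleftrightarrow> (\<exists>c\<in>D. E c h \<and> sub_M D E x c)"
      unfolding mem_stage_iff_sub_lower_stage[OF x \<gamma>] by simp
  qed
  moreover have "history D E h"
    unfolding history_def
  proof (intro ballI impI)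
    fix x y assume x: "x \<in> D" "E x h" and y: "y \<in> D"
    then obtain \<delta> where \<delta>: "\<delta> \<in> underS \<gamma>" "x = stage \<delta>" using h(2) by blast
    have "(\<exists>c\<in>D. (E c x \<and> E c h) \<and> sub_M D E y c) \<longleftrightarrow> (\<exists>c\<in>stage ` underS \<delta>. sub_M D E y c)"
      by (rule ex_lower_stage) (use lower_stages_of_stage[OF \<delta>(1)] h(2) \<delta>(2) in simp)
    then show "E y x \<longleftrightarrow> (\<exists>c\<in>D. E c x \<and> E c h \<and> sub_M D E y c)"
      unfolding \<delta>(2) mem_stage_iff_sub_lower_stage[OF y underS_in_Field[OF \<delta>(1)]] by simp
  qed
  ultimately show ?thesis unfolding level_def using h(1) by blast
qed

lemma LT_model: "LT_model D E"
proof -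
  have "\<exists>b\<in>D. \<forall>x\<in>D. E x b \<longleftrightarrow> x \<in> F \<and> E x a" if a: "a \<in> D" for F a
  proof -
    obtain b where "b \<in> D" "\<forall>x\<in>D. E x b \<longleftrightarrow> x \<in> {x \<in> D. x \<in> F \<and> E x a}"
      using realize[OF rank_Field[OF a], of "{x \<in> D. x \<in> F \<and> E x a}"] rank_less a by blast
    then show ?thesis by blast
  qed
  moreover have "\<exists>l\<in>D. level D E l \<and> sub_M D E a l" if a: "a \<in> D" for a
    using sub_stage_rank[OF a] stage(1) level_stage rank_Field[OF a] by blast
  ultimately show ?thesis using extensional unfolding LT_model_def extensional_on_def by blast
qed

end

lemma V_ranking_dir_image:
  assumes "V_ranking W D E \<rho>" and f: "inj f"
  shows "V_ranking (dir_image W f) D E (f \<circ> \<rho>)"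
proof -
  interpret V_ranking W D E \<rho> by fact
  have in_dir_image: "(f a, f b) \<in> dir_image W f \<longleftrightarrow> (a, b) \<in> W" for a b
    unfolding dir_image_def using f by (auto dest: injD)
  have Field_dir_image: "Field (dir_image W f) = f ` Field W" by (rule dir_image_Field)
  show ?thesis
  proof (unfold_locales)
    show "Well_order (dir_image W f)"
      using Well_order_dir_image[OF WELL inj_on_subset[OF f subset_UNIV]] .
    show "extensional_on D E" by (rule extensional)
    show "(f \<circ> \<rho>) x \<in> Field (dir_image W f)" if "x \<in> D" for x
      unfolding Field_dir_image using rank_Field[OF that] by simp
    show "((f \<circ> \<rho>) x, (f \<circ> \<rho>) y) \<in> dir_image W f \<and> (f \<circ> \<rho>) x \<noteq> (f \<circ> \<rho>) y"
      if "x \<in> D" "y \<in> D" "E x y" for x y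
      using rank_less[OF that] in_dir_image f by (simp add: inj_eq)
    show "\<exists>b\<in>D. (\<forall>x\<in>D. E x b \<longleftrightarrow> x \<in> S) \<and> ((f \<circ> \<rho>) b, \<beta>) \<in> dir_image W f"
      if \<beta>: "\<beta> \<in> Field (dir_image W f)" and S: "S \<subseteq> D"
        and below: "\<And>x. x \<in> S \<Longrightarrow> ((f \<circ> \<rho>) x, \<beta>) \<in> dir_image W f \<and> (f \<circ> \<rho>) x \<noteq> \<beta>" for \<beta> S
    proof -
      obtain \<beta>' where \<beta>': "\<beta>' \<in> Field W" "\<beta> = f \<beta>'" using \<beta> unfolding Field_dir_image by blast
      then show ?thesis
        using realize[OF \<beta>'(1) S] below in_dir_image by auto
    qed
  qed
qed

section \<open>Isomorphisms with V_alpha\<close>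

locale V_isomorphism = wo_rel r for r :: "'o rel" +
  fixes D :: "'a set" and E :: "'a \<Rightarrow> 'a \<Rightarrow> bool"
    and G :: "'a \<Rightarrow> ('a + nat) rel" and root :: "'a \<Rightarrow> 'a + nat"
  assumes code_in_Vcode: "d \<in> D \<Longrightarrow> (G d, root d) \<in> Vcode r"
    and code_inj: "d \<in> D \<Longrightarrow> e \<in> D \<Longrightarrow> code_eq (G d, root d) (G e, root e) \<Longrightarrow> d = e"
    and code_surj: "c \<in> Vcode r \<Longrightarrow> \<exists>d\<in>D. code_eq c (G d, root d)"
    and code_mem: "d \<in> D \<Longrightarrow> e \<in> D \<Longrightarrow>
      E d e \<longleftrightarrow> (\<exists>z. (z, root e) \<in> G e \<and> code_eq (G d, root d) (G e, z))"

lemma iso_V_imp_V_isomorphism: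
  fixes D :: "'a set"
  assumes "Well_order r" and "iso_V D E r"
  shows "\<exists>G root. V_isomorphism r D E G root"
proof -
  obtain g :: "'a \<Rightarrow> ('a + nat) code" where g: "\<forall>d\<in>D. g d \<in> Vcode r"
    "\<forall>d\<in>D. \<forall>e\<in>D. code_eq (g d) (g e) \<longrightarrow> d = e" "\<forall>c\<in>Vcode r. \<exists>d\<in>D. code_eq c (g d)"
    "\<forall>d\<in>D. \<forall>e\<in>D. E d e \<longleftrightarrow> code_mem (g d) (g e)"
    using assms(2) unfolding iso_V_def by blast
  have "V_isomorphism r D E (fst \<circ> g) (snd \<circ> g)"
    by unfold_locales (use assms(1) g in \<open>auto simp: wo_rel_def code_mem_def\<close>)
  then show ?thesis by blast
qed

context V_isomorphism
begin

definition rank :: "'a \<Rightarrow> 'o" where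
  "rank d = minim {f (root d) | f. rank_map r (G d, root d) f}"

lemma rank:
  assumes "d \<in> D"
  shows "\<exists>f. rank_map r (G d, root d) f \<and> f (root d) = rank d" and "rank d \<in> Field r"
proof -
  let ?A = "{f (root d) | f. rank_map r (G d, root d) f}"
  have "?A \<subseteq> Field r" using rank_map_Field by fastforce
  moreover have "?A \<noteq> {}" using code_in_Vcode[OF assms] unfolding Vcode_iff by blast
  ultimately have "rank d \<in> ?A" unfolding rank_def by (rule minim_in)
  then show "\<exists>f. rank_map r (G d, root d) f \<and> f (root d) = rank d" by auto
  then show "rank d \<in> Field r" using rank_map_Field by fastforce
qed

lemma rank_least:
  assumes d: "d \<in> D" and eq: "code_eq (R, x) (G d, root d)" and f: "rank_map r (R, x) f"
  shows "(rank d, f x) \<in> r"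
proof -
  obtain h where h: "rank_map r (G d, root d) h" "(h (root d), f x) \<in> r"
    using rank_map_code_eq[OF eq f] by blast
  have "{f (root d) | f. rank_map r (G d, root d) f} \<subseteq> Field r" using rank_map_Field by fastforce
  then have "(rank d, h (root d)) \<in> r" unfolding rank_def using h(1) by (blast intro: minim_least)
  then show ?thesis using h(2) TRANS by (meson transD)
qed

lemma member_code:
  "x \<in> D \<Longrightarrow> d \<in> D \<Longrightarrow> E x d \<Longrightarrow> \<exists>u. (u, root d) \<in> G d \<and> code_eq (G x, root x) (G d, u)"
  by (simp add: code_mem)

lemma child_code:
  assumes d: "d \<in> D" and u: "(u, root d) \<in> G d"
  shows "\<exists>x\<in>D. E x d \<and> code_eq (G d, u) (G x, root x)"
proof -
  have "(G d, u) \<in> Vcode r" using Vcode_rtrancl[OF code_in_Vcode[OF d]] u by blast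
  then obtain x where x: "x \<in> D" "code_eq (G d, u) (G x, root x)" using code_surj by blast
  then have "E x d" using code_mem[OF x(1) d] u code_eq_sym[OF x(2)] by blast
  then show ?thesis using x by blast
qed

lemma rank_less:
  assumes x: "x \<in> D" and y: "y \<in> D" and "E x y"
  shows "(rank x, rank y) \<in> r \<and> rank x \<noteq> rank y"
proof -
  obtain z where z: "(z, root y) \<in> G y" "code_eq (G x, root x) (G y, z)"
    using member_code[OF x y \<open>E x y\<close>] by blast
  obtain f where f: "rank_map r (G y, root y) f" "f (root y) = rank y" using rank(1)[OF y] by blast
  have "(rank x, f z) \<in> r"
    using rank_least[OF x code_eq_sym[OF z(2)] rank_map_rtrancl[OF f(1)]] z(1) by blast
  moreover have "(f z, f (root y)) \<in> r \<and> f z \<noteq> f (root y)" using rank_map_less[OF f(1) z(1)] by blast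
  ultimately show ?thesis using le_less_trans_rel f(2) by metis
qed

lemma wf_mem_rel: "wf (mem_rel D E)"
proof (rule wf_subset)
  show "wf (inv_image (r - Id) rank)" using WF by (rule wf_inv_image)
  show "mem_rel D E \<subseteq> inv_image (r - Id) rank" using rank_less by auto
qed

lemma code_eq_mem_graph: "y \<in> D \<Longrightarrow> code_eq (mem_graph D E, Inl y) (G y, root y)"
proof (induction y rule: wf_induct_rule[OF wf_mem_rel])
  case (1 y)
  show ?case
  proof (rule code_eq_childI)
    fix x' assume "(x', Inl y) \<in> mem_graph D E"
    then obtain x where x: "x \<in> D" "x' = Inl x" "E x y" using mem_graph_children[OF "1.prems"] by blast
    then have IH: "code_eq (mem_graph D E, Inl x) (G x, root x)" using "1.IH" "1.prems" by simp
    obtain z where "(z, root y) \<in> G y" "code_eq (G x, root x) (G y, z)"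
      using member_code[OF x(1) "1.prems" x(3)] by blast
    then show "\<exists>z. (z, root y) \<in> G y \<and> code_eq (mem_graph D E, x') (G y, z)"
      using x(2) code_eq_trans[OF IH] by blast
  next
    fix z assume "(z, root y) \<in> G y"
    then obtain x where x: "x \<in> D" "E x y" "code_eq (G y, z) (G x, root x)"
      using child_code[OF "1.prems"] by blast
    then have "code_eq (mem_graph D E, Inl x) (G x, root x)" using "1.IH" "1.prems" by simp
    then have "code_eq (mem_graph D E, Inl x) (G y, z)" by (rule code_eq_trans[OF _ code_eq_sym[OF x(3)]])
    moreover have "(Inl x, Inl y) \<in> mem_graph D E" using x "1.prems" by simp
    ultimately show "\<exists>x'. (x', Inl y) \<in> mem_graph D E \<and> code_eq (mem_graph D E, x') (G y, z)"
      by blast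
  qed
qed

lemma extensional: "extensional_on D E"
  unfolding extensional_on_def
proof (intro ballI impI)
  fix a b assume a: "a \<in> D" and b: "b \<in> D" and same: "\<forall>x\<in>D. E x a \<longleftrightarrow> E x b"
  have "code_eq (G a, root a) (G b, root b)"
  proof (rule code_eq_childI)
    fix u assume "(u, root a) \<in> G a"
    then obtain x where x: "x \<in> D" "E x a" "code_eq (G a, u) (G x, root x)" using child_code[OF a] by blast
    then obtain z where "(z, root b) \<in> G b" "code_eq (G x, root x) (G b, z)"
      using member_code[OF x(1) b] same by blast
    then show "\<exists>z. (z, root b) \<in> G b \<and> code_eq (G a, u) (G b, z)" using code_eq_trans[OF x(3)] by blast
  next
    fix u assume "(u, root b) \<in> G b"
    then obtain x where x: "x \<in> D" "E x b" "code_eq (G b, u) (G x, root x)" using child_code[OF b] by blast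
    then obtain z where "(z, root a) \<in> G a" "code_eq (G x, root x) (G a, z)"
      using member_code[OF x(1) a] same by blast
    then show "\<exists>z. (z, root a) \<in> G a \<and> code_eq (G a, z) (G b, u)"
      using code_eq_sym[OF code_eq_trans[OF x(3)]] by blast
  qed
  then show "a = b" using code_inj a b by blast
qed

lemma code_eq_set_graph_Inl: "x \<in> D \<Longrightarrow> code_eq (set_graph D E S, Inl x) (G x, root x)"
  using code_eq_trans[OF code_eq_set_graph_mem_graph code_eq_mem_graph] .

lemma set_graph_rank_map:
  assumes \<beta>: "\<beta> \<in> Field r" and S: "S \<subseteq> D"
    and below: "\<And>x. x \<in> S \<Longrightarrow> (rank x, \<beta>) \<in> r \<and> rank x \<noteq> \<beta>"
  shows "rank_map r (set_graph D E S, Inr 0) (case_sum rank (\<lambda>_. \<beta>))"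
proof (rule rank_mapI)
  fix u assume "(u, Inr 0) \<in> (set_graph D E S)\<^sup>*"
  then have "u = Inr 0 \<or> u \<in> Inl ` D" by (rule set_graph_rtrancl_Inr[OF S])
  then show "case_sum rank (\<lambda>_. \<beta>) u \<in> Field r" using \<beta> rank(2) by auto
next
  fix u v assume "(u, v) \<in> set_graph D E S"
  then consider x y where "u = Inl x" "v = Inl y" "x \<in> D" "y \<in> D" "E x y"
    | x where "x \<in> S" "u = Inl x" "v = Inr 0"
    unfolding in_set_graph in_mem_graph by blast
  then show "(case_sum rank (\<lambda>_. \<beta>) u, case_sum rank (\<lambda>_. \<beta>) v) \<in> r \<and>
      case_sum rank (\<lambda>_. \<beta>) u \<noteq> case_sum rank (\<lambda>_. \<beta>) v"
    by cases (simp_all add: rank_less below)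
qed

lemma mem_iff_if_code_eq_set_graph:
  assumes S: "S \<subseteq> D" and b: "b \<in> D" "code_eq (set_graph D E S, Inr 0) (G b, root b)" and x: "x \<in> D"
  shows "E x b \<longleftrightarrow> x \<in> S"
proof
  assume "E x b"
  then obtain u where u: "(u, root b) \<in> G b" "code_eq (G x, root x) (G b, u)"
    using member_code[OF x b(1)] by blast
  obtain w where w: "(w, Inr 0) \<in> set_graph D E S" "code_eq (set_graph D E S, w) (G b, u)"
    using code_eq_childD2[OF b(2) u(1)] by blast
  then obtain x' where x': "x' \<in> S" "w = Inl x'" unfolding set_graph_Inr_children by blast
  with S have x'D: "x' \<in> D" by blast
  have "code_eq (G x', root x') (G b, u)"
    using code_eq_trans[OF code_eq_sym[OF code_eq_set_graph_Inl[OF x'D]] w(2)[unfolded x'(2)]] .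
  then have "x = x'" using code_inj[OF x x'D code_eq_trans[OF u(2) code_eq_sym]] by blast
  then show "x \<in> S" using x'(1) by simp
next
  assume "x \<in> S"
  then have "(Inl x, Inr 0) \<in> set_graph D E S" unfolding set_graph_Inr_children by blast
  then obtain z where z: "(z, root b) \<in> G b" "code_eq (set_graph D E S, Inl x) (G b, z)"
    using code_eq_childD1[OF b(2)] by blast
  have "code_eq (G x, root x) (G b, z)"
    using code_eq_trans[OF code_eq_sym[OF code_eq_set_graph_Inl[OF x]] z(2)] .
  then show "E x b" using code_mem[OF x b(1)] z(1) by blast
qed

lemma realize:
  assumes \<beta>: "\<beta> \<in> Field r" and S: "S \<subseteq> D"
    and below: "\<And>x. x \<in> S \<Longrightarrow> (rank x, \<beta>) \<in> r \<and> rank x \<noteq> \<beta>"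
  shows "\<exists>b\<in>D. (\<forall>x\<in>D. E x b \<longleftrightarrow> x \<in> S) \<and> (rank b, \<beta>) \<in> r"
proof -
  note f = set_graph_rank_map[OF assms]
  then have "(set_graph D E S, Inr 0) \<in> Vcode r" unfolding Vcode_iff using wf_set_graph[OF wf_mem_rel] by blast
  then obtain b where b: "b \<in> D" "code_eq (set_graph D E S, Inr 0) (G b, root b)" using code_surj by blast
  have "(rank b, \<beta>) \<in> r" using rank_least[OF b f] by simp
  then show ?thesis using mem_iff_if_code_eq_set_graph[OF S b] b(1) by blast
qed

lemma V_ranking: "V_ranking r D E rank"
  by unfold_locales (use WELL extensional rank(2) rank_less realize in auto)

end

section \<open>Models of level theory\<close>

lemma sub_MD: "sub_M D E x c \<Longrightarrow> y \<in> D \<Longrightarrow> E y x \<Longrightarrow> E y c"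
  unfolding sub_M_def by blast

lemma sub_M_refl: "sub_M D E x x"
  unfolding sub_M_def by blast

lemma sub_M_trans: "sub_M D E x c \<Longrightarrow> sub_M D E c d \<Longrightarrow> sub_M D E x d"
  unfolding sub_M_def by blast

lemma historyD:
  "history D E h \<Longrightarrow> x \<in> D \<Longrightarrow> E x h \<Longrightarrow> y \<in> D \<Longrightarrow> E y x \<longleftrightarrow> (\<exists>c\<in>D. E c x \<and> E c h \<and> sub_M D E y c)"
  unfolding history_def by blast

lemma is_pot_ofD: "is_pot_of D E l h \<Longrightarrow> x \<in> D \<Longrightarrow> E x l \<longleftrightarrow> (\<exists>c\<in>D. E c h \<and> sub_M D E x c)"
  unfolding is_pot_of_def by blast

lemma acc_mem_relI:
  "x \<in> D \<Longrightarrow> (\<And>y. y \<in> D \<Longrightarrow> E y x \<Longrightarrow> y \<in> Wellfounded.acc (mem_rel D E)) \<Longrightarrow>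
    x \<in> Wellfounded.acc (mem_rel D E)"
  by (rule acc.accI) auto

lemma acc_mem_rel_sub_M:
  assumes "x \<in> D" and "c \<in> Wellfounded.acc (mem_rel D E)" and "sub_M D E x c" and "c \<in> D"
  shows "x \<in> Wellfounded.acc (mem_rel D E)"
proof (rule acc_mem_relI[OF assms(1)])
  fix y assume "y \<in> D" "E y x"
  then have "(y, c) \<in> mem_rel D E" using sub_MD[OF assms(3)] assms(4) by simp
  then show "y \<in> Wellfounded.acc (mem_rel D E)" using acc_downward[OF assms(2)] by blast
qed

locale level_theory =
  fixes D :: "'a set" and E :: "'a \<Rightarrow> 'a \<Rightarrow> bool"
  assumes LT: "LT_model D E"
begin

lemma extensional: "extensional_on D E"
  using LT unfolding LT_model_def extensional_on_def by blast

lemma separation: "a \<in> D \<Longrightarrow> \<exists>b\<in>D. \<forall>x\<in>D. E x b \<longleftrightarrow> x \<in> F \<and> E x a"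
  using LT unfolding LT_model_def by blast

lemma stratification: "a \<in> D \<Longrightarrow> \<exists>l\<in>D. level D E l \<and> sub_M D E a l"
  using LT unfolding LT_model_def by blast

text \<open>Russell's argument: if B had no minimal element, separation would yield the set I of all
  non-self-membered x lying in every element of B; as I is included in some b' \<in> b for each b \<in> B,
  the history condition puts I into every b \<in> B, so I \<in> I iff I \<notin> I.\<close>
lemma history_minimal:
  assumes h: "history D E h" and B: "B \<subseteq> {c \<in> D. E c h}" "b0 \<in> B"
  shows "\<exists>b\<in>B. \<forall>b'\<in>B. \<not> E b' b"
proof (rule ccontr)
  assume "\<not> (\<exists>b\<in>B. \<forall>b'\<in>B. \<not> E b' b)"
  then have no_min: "\<exists>b'\<in>B. E b' b" if "b \<in> B" for b using that by blast
  obtain I where I: "I \<in> D" "\<forall>x\<in>D. E x I \<longleftrightarrow> x \<in> {x. (\<forall>b\<in>B. E x b) \<and> \<not> E x x} \<and> E x b0"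
    using separation B by blast
  have "E I b" if b: "b \<in> B" for b
  proof -
    obtain b' where b': "b' \<in> B" "E b' b" using no_min[OF b] by blast
    have "sub_M D E I b'" unfolding sub_M_def using I(2) b'(1) by blast
    then show "E I b" using historyD[OF h _ _ I(1), of b] b b' B by blast
  qed
  then show False using I B(2) by blast
qed

lemma history_member_acc:
  assumes h: "history D E h" and c: "c \<in> D" "E c h"
  shows "c \<in> Wellfounded.acc (mem_rel D E)"
proof (rule ccontr)
  let ?B = "{c \<in> D. E c h \<and> c \<notin> Wellfounded.acc (mem_rel D E)}"
  assume "c \<notin> Wellfounded.acc (mem_rel D E)"
  then obtain b where b: "b \<in> ?B" and b_min: "\<forall>b'\<in>?B. \<not> E b' b"
    using history_minimal[OF h, of ?B c] c by blast
  then obtain y where y: "y \<in> D" "E y b" "y \<notin> Wellfounded.acc (mem_rel D E)"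
    using acc_mem_relI[of b D E] by blast
  then obtain c' where c': "c' \<in> D" "E c' b" "E c' h" "sub_M D E y c'"
    using historyD[OF h _ _ y(1), of b] b by blast
  then have "c' \<in> Wellfounded.acc (mem_rel D E)" using b_min by blast
  then show False using acc_mem_rel_sub_M[OF y(1) _ c'(4) c'(1)] y(3) by blast
qed

lemma wf_mem_rel: "wf (mem_rel D E)"
proof (rule acc_wfI, rule allI)
  fix x
  show "x \<in> Wellfounded.acc (mem_rel D E)"
  proof (cases "x \<in> D")
    case True
    obtain l h where "level D E l" "sub_M D E x l" "h \<in> D" "history D E h" "is_pot_of D E l h"
      using stratification[OF True] unfolding level_def by blast
    show ?thesis
    proof (rule acc_mem_relI[OF True])
      fix y assume y: "y \<in> D" "E y x"
      then obtain c where "c \<in> D" "E c h" "sub_M D E y c"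
        using is_pot_ofD[OF \<open>is_pot_of D E l h\<close>] sub_MD[OF \<open>sub_M D E x l\<close>] by blast
      then show "y \<in> Wellfounded.acc (mem_rel D E)"
        using acc_mem_rel_sub_M[OF y(1) history_member_acc[OF \<open>history D E h\<close>]] by blast
    qed
  qed (auto intro: acc.accI)
qed

lemma not_mem_self: "x \<in> D \<Longrightarrow> \<not> E x x"
  using wf_not_refl[OF wf_mem_rel, of x] by simp

lemma mem_asym: "x \<in> D \<Longrightarrow> y \<in> D \<Longrightarrow> E x y \<Longrightarrow> \<not> E y x"
  using wf_not_sym[OF wf_mem_rel, of x y] by simp

lemma history_member_transitive:
  assumes h: "history D E h"
  shows "c \<in> D \<Longrightarrow> E c h \<Longrightarrow> z \<in> D \<Longrightarrow> E z c \<Longrightarrow> sub_M D E z c"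
proof (induction c arbitrary: z rule: wf_induct_rule[OF wf_mem_rel])
  case (1 c)
  obtain c' where c': "c' \<in> D" "E c' c" "E c' h" "sub_M D E z c'"
    using historyD[OF h "1.prems"(1,2,3)] "1.prems"(4) by blast
  show ?case unfolding sub_M_def
  proof (intro ballI impI)
    fix w assume "w \<in> D" "E w z"
    then have "E w c'" using sub_MD[OF c'(4)] by blast
    then have "sub_M D E w c'" using "1.IH"[of c' w] c' \<open>w \<in> D\<close> "1.prems"(1) by simp
    then show "E w c" using historyD[OF h "1.prems"(1,2) \<open>w \<in> D\<close>] c' by blast
  qed
qed

definition levels :: "'a set" where
  "levels = {l \<in> D. level D E l}"

text \<open>The history witnessing that c is a level is h \<inter> c.\<close>
lemma history_member_level:
  assumes h: "history D E h" and c: "c \<in> D" "E c h"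
  shows "c \<in> levels"
proof -
  obtain h' where h': "h' \<in> D" "\<forall>x\<in>D. E x h' \<longleftrightarrow> x \<in> {x. E x h} \<and> E x c"
    using separation[OF c(1)] by blast
  then have in_h': "E x h' \<longleftrightarrow> E x h \<and> E x c" if "x \<in> D" for x using that by blast
  have "history D E h'"
    unfolding history_def
  proof (intro ballI impI)
    fix x y assume x: "x \<in> D" "E x h'" and y: "y \<in> D"
    then have xh: "E x h" and xc: "E x c" using in_h' by auto
    have "E d c" if "d \<in> D" "E d x" for d
      using sub_MD[OF history_member_transitive[OF h c x(1) xc]] that by blast
    then show "E y x \<longleftrightarrow> (\<exists>d\<in>D. E d x \<and> E d h' \<and> sub_M D E y d)"
      using historyD[OF h x(1) xh y] in_h' by blast
  qed
  moreover have "is_pot_of D E c h'"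
    unfolding is_pot_of_def using historyD[OF h c] in_h' by blast
  ultimately show ?thesis unfolding levels_def level_def using h'(1) c(1) by blast
qed

lemma level_transitive:
  assumes l: "l \<in> levels" and z: "z \<in> D" "E z c" and c: "c \<in> D" "E c l"
  shows "E z l"
proof -
  obtain h where h: "history D E h" "is_pot_of D E l h" using l unfolding levels_def level_def by blast
  obtain d where d: "d \<in> D" "E d h" "sub_M D E c d" using is_pot_ofD[OF h(2) c(1)] c(2) by blast
  have "E z d" using sub_MD[OF d(3) z] .
  then obtain d' where d': "d' \<in> D" "E d' h" "sub_M D E z d'" using historyD[OF h(1) d(1,2) z(1)] by blast
  show ?thesis unfolding is_pot_ofD[OF h(2) z(1)] using d' by blast
qed

lemma mem_level_iff:
  assumes l: "l \<in> levels" and x: "x \<in> D"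
  shows "E x l \<longleftrightarrow> (\<exists>m\<in>levels. E m l \<and> sub_M D E x m)"
proof -
  obtain h where h: "history D E h" "is_pot_of D E l h" using l unfolding levels_def level_def by blast
  show ?thesis
  proof
    assume "E x l"
    then obtain c where c: "c \<in> D" "E c h" "sub_M D E x c" using is_pot_ofD[OF h(2) x] by blast
    have "E c l" unfolding is_pot_ofD[OF h(2) c(1)] using c(1,2) sub_M_refl[of D E c] by blast
    then show "\<exists>m\<in>levels. E m l \<and> sub_M D E x m" using history_member_level[OF h(1) c(1,2)] c(3) by blast
  next
    assume "\<exists>m\<in>levels. E m l \<and> sub_M D E x m"
    then obtain m where m: "m \<in> levels" "E m l" "sub_M D E x m" by blast
    then have "m \<in> D" unfolding levels_def by simp
    then obtain d where d: "d \<in> D" "E d h" "sub_M D E m d" using is_pot_ofD[OF h(2)] m(2) by blast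
    have "sub_M D E x d" using sub_M_trans[OF m(3) d(3)] .
    then show "E x l" unfolding is_pot_ofD[OF h(2) x] using d(1,2) by blast
  qed
qed

lemma levels_eqI:
  assumes l1: "l1 \<in> levels" and l2: "l2 \<in> levels" and same: "\<And>m. m \<in> levels \<Longrightarrow> E m l1 \<longleftrightarrow> E m l2"
  shows "l1 = l2"
proof -
  have "E x l1 \<longleftrightarrow> E x l2" if "x \<in> D" for x
    unfolding mem_level_iff[OF l1 that] mem_level_iff[OF l2 that] using same by blast
  then show ?thesis using extensional l1 l2 unfolding extensional_on_def levels_def by blast
qed

text \<open>By a double induction on membership: two incomparable levels have, by the induction
  hypotheses, the same levels as members, so they coincide.\<close>
lemma levels_linear:
  assumes "l1 \<in> levels" and "l2 \<in> levels"
  shows "E l1 l2 \<or> l1 = l2 \<or> E l2 l1"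
  using assms
proof (induction l1 arbitrary: l2 rule: wf_induct_rule[OF wf_mem_rel])
  case (1 l1)
  note IH1 = "1.IH" and l1 = "1.prems"(1)
  from "1.prems"(2) show ?case
  proof (induction l2 rule: wf_induct_rule[OF wf_mem_rel])
    case (1 l2)
    note IH2 = "1.IH" and l2 = "1.prems"
    have l1D: "l1 \<in> D" and l2D: "l2 \<in> D" using l1 l2 unfolding levels_def by auto
    show ?case
    proof (rule ccontr)
      assume "\<not> ?case"
      then have no_mem: "\<not> E l1 l2" "\<not> E l2 l1" "l1 \<noteq> l2" by auto
      have "E m l1 \<longleftrightarrow> E m l2" if m: "m \<in> levels" for m
      proof
        assume "E m l1"
        then have "E m l2 \<or> m = l2 \<or> E l2 m" using IH1[of m l2] m l1D l2 unfolding levels_def by auto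
        then show "E m l2" using no_mem level_transitive[OF l1 l2D _ _ \<open>E m l1\<close>] \<open>E m l1\<close> m
          unfolding levels_def by auto
      next
        assume "E m l2"
        then have "E l1 m \<or> l1 = m \<or> E m l1" using IH2[of m] m l2D unfolding levels_def by auto
        then show "E m l1" using no_mem level_transitive[OF l2 l1D _ _ \<open>E m l2\<close>] \<open>E m l2\<close> m
          unfolding levels_def by auto
      qed
      then show False using levels_eqI[OF l1 l2] no_mem(3) by blast
    qed
  qed
qed

lemma least_level_exists:
  assumes a: "a \<in> D"
  shows "\<exists>m\<in>levels. sub_M D E a m \<and> (\<forall>l\<in>levels. sub_M D E a l \<longrightarrow> m = l \<or> E m l)"
proof -
  let ?Q = "{l \<in> levels. sub_M D E a l}"
  obtain l0 where "l0 \<in> D" "level D E l0" "sub_M D E a l0" using stratification[OF a] by blast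
  then have "l0 \<in> ?Q" unfolding levels_def by simp
  then obtain m where m: "m \<in> ?Q" and m_min: "\<forall>l. (l, m) \<in> mem_rel D E \<longrightarrow> l \<notin> ?Q"
    using wf_mem_rel[unfolded wf_eq_minimal, rule_format, of l0 ?Q] by blast
  have "m = l \<or> E m l" if l: "l \<in> levels" "sub_M D E a l" for l
  proof -
    have "E m l \<or> m = l \<or> E l m" using levels_linear m l(1) by blast
    moreover have "\<not> E l m" using m_min l m unfolding levels_def by auto
    ultimately show ?thesis by blast
  qed
  then show ?thesis using m by blast
qed

definition least_level :: "'a \<Rightarrow> 'a" where
  "least_level a = (SOME m. m \<in> levels \<and> sub_M D E a m \<and> (\<forall>l\<in>levels. sub_M D E a l \<longrightarrow> m = l \<or> E m l))"

lemma least_level: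
  assumes "a \<in> D"
  shows "least_level a \<in> levels" and "sub_M D E a (least_level a)"
    and "l \<in> levels \<Longrightarrow> sub_M D E a l \<Longrightarrow> least_level a = l \<or> E (least_level a) l"
proof -
  from least_level_exists[OF assms]
  have "\<exists>m. m \<in> levels \<and> sub_M D E a m \<and> (\<forall>l\<in>levels. sub_M D E a l \<longrightarrow> m = l \<or> E m l)" by blast
  then have "least_level a \<in> levels \<and> sub_M D E a (least_level a) \<and>
      (\<forall>l\<in>levels. sub_M D E a l \<longrightarrow> least_level a = l \<or> E (least_level a) l)"
    unfolding least_level_def by (rule someI_ex)
  then show "least_level a \<in> levels" "sub_M D E a (least_level a)"
    "l \<in> levels \<Longrightarrow> sub_M D E a l \<Longrightarrow> least_level a = l \<or> E (least_level a) l" by blast+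
qed

definition level_order :: "'a rel" where
  "level_order = {(l, l'). l \<in> levels \<and> l' \<in> levels \<and> (l = l' \<or> E l l')}"

lemma Field_level_order: "Field level_order = levels"
  by (auto simp: Field_iff level_order_def)

lemma Well_order_level_order: "Well_order level_order"
proof -
  have "levels \<subseteq> D" unfolding levels_def by blast
  have "level_order \<subseteq> Field level_order \<times> Field level_order" by (auto intro: FieldI1 FieldI2)
  moreover have "Refl level_order" unfolding refl_on_def Field_level_order by (auto simp: level_order_def)
  moreover have "trans level_order"
    unfolding trans_def level_order_def using level_transitive \<open>levels \<subseteq> D\<close> by blast
  moreover have "antisym level_order"
    unfolding antisym_def level_order_def using mem_asym \<open>levels \<subseteq> D\<close> by blast
  moreover have "Total level_order"
    unfolding total_on_def Field_level_order by (auto simp: level_order_def dest: levels_linear)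
  moreover have "wf (level_order - Id)"
    by (rule wf_subset[OF wf_mem_rel]) (use \<open>levels \<subseteq> D\<close> in \<open>auto simp: level_order_def\<close>)
  ultimately show ?thesis
    unfolding well_order_on_def linear_order_on_def partial_order_on_def preorder_on_def by blast
qed

lemma V_ranking: "V_ranking level_order D E least_level"
proof (unfold_locales)
  show "Well_order level_order" by (rule Well_order_level_order)
  show "extensional_on D E" by (rule extensional)
  show "least_level x \<in> Field level_order" if "x \<in> D" for x
    unfolding Field_level_order using least_level(1)[OF that] .
  show "(least_level x, least_level y) \<in> level_order \<and> least_level x \<noteq> least_level y"
    if x: "x \<in> D" and y: "y \<in> D" and "E x y" for x y
  proof -
    let ?m = "least_level y"
    have m: "?m \<in> levels" "?m \<in> D" using least_level(1)[OF y] unfolding levels_def by auto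
    have "E x ?m" using sub_MD[OF least_level(2)[OF y] x \<open>E x y\<close>] .
    then obtain c where c: "c \<in> levels" "E c ?m" "sub_M D E x c" using mem_level_iff[OF m(1) x] by blast
    have "c \<in> D" using c(1) unfolding levels_def by blast
    have "least_level x = c \<or> E (least_level x) c" using least_level(3)[OF x c(1,3)] .
    then have "E (least_level x) ?m"
      using level_transitive[OF m(1) _ _ \<open>c \<in> D\<close> c(2)] least_level(1)[OF x] c(2) unfolding levels_def by auto
    then show ?thesis using least_level(1)[OF x] m not_mem_self unfolding level_order_def by auto
  qed
  show "\<exists>b\<in>D. (\<forall>x\<in>D. E x b \<longleftrightarrow> x \<in> S) \<and> (least_level b, l) \<in> level_order"
    if l: "l \<in> Field level_order" and S: "S \<subseteq> D"
      and below: "\<And>x. x \<in> S \<Longrightarrow> (least_level x, l) \<in> level_order \<and> least_level x \<noteq> l" for l S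
  proof -
    have l: "l \<in> levels" "l \<in> D" using l unfolding Field_level_order levels_def by auto
    have S_l: "E x l" if "x \<in> S" for x
    proof -
      have "E (least_level x) l" using below[OF that] unfolding level_order_def by auto
      then show ?thesis
        using mem_level_iff[OF l(1)] least_level(1,2) S that by blast
    qed
    obtain b where b: "b \<in> D" "\<forall>x\<in>D. E x b \<longleftrightarrow> x \<in> S \<and> E x l" using separation[OF l(2)] by blast
    then have "sub_M D E b l" unfolding sub_M_def by blast
    then have "(least_level b, l) \<in> level_order"
      using least_level(1,3)[OF b(1)] l(1) unfolding level_order_def by blast
    then show ?thesis using b S_l S by blast
  qed
qed

end

theorem theorem23:
  fixes D :: "'a set" and E :: "'a \<Rightarrow> 'a \<Rightarrow> bool"
  assumes "D \<noteq> {}"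
  shows "LT_model D E \<longleftrightarrow>
    (\<exists>r :: ('a + nat) rel. Well_order r \<and> Field r \<noteq> {} \<and> iso_V D E r)"
proof
  assume "LT_model D E"
  then interpret L: level_theory D E by unfold_locales
  let ?W = "dir_image L.level_order (Inl :: 'a \<Rightarrow> 'a + nat)"
  have "V_ranking ?W D E (Inl \<circ> L.least_level)"
    by (rule V_ranking_dir_image[OF L.V_ranking]) simp
  then interpret V: V_ranking ?W D E "Inl \<circ> L.least_level" .
  have "Field ?W \<noteq> {}" using V.rank_Field assms by blast
  then show "\<exists>r :: ('a + nat) rel. Well_order r \<and> Field r \<noteq> {} \<and> iso_V D E r"
    using V.WELL V.iso_V by blast
next
  assume "\<exists>r :: ('a + nat) rel. Well_order r \<and> Field r \<noteq> {} \<and> iso_V D E r"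
  then obtain r :: "('a + nat) rel" where "Well_order r" "iso_V D E r" by blast
  then obtain G root where "V_isomorphism r D E G root" using iso_V_imp_V_isomorphism by blast
  then show "LT_model D E" using V_isomorphism.V_ranking V_ranking.LT_model by blast
qed

end
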